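(* Let $J$ be an orthogonal complex structure on $\mathbb R^{2n}$ ($n\ge2$), and let $\Lambda_J=\{a-iJa: a\in\mathbb R^{2n}\}\subset\mathbb C^{2n}$. Then the map $$S^{2n-1}\to S(\Lambda_J),\qquad a\mapsto \tfrac{1}{\sqrt2}(a-iJa),$$ is orientation preserving if and only if $J$ is compatible with the standard orientation of $\mathbb R^{2n}$.
   Context: $\mathbb C^{2n}=\mathbb R^{2n}\oplus i\mathbb R^{2n}$ carries the complex bilinear extension of the standard inner product. An orthogonal complex structure $J$ satisfies $J^2=-1$ and $\langle Ja,Jb\rangle=\langle a,b\rangle$; it is compatible with the orientation if there is a positively oriented basis of the form $e_1,Je_1,\dots,e_n,Je_n$. $\Lambda_J$ is a complex $n$-dimensional subspace of $\mathbb C^{2n}$ (complex structure given by multiplication by $i$, which corresponds to $J$ under $a\mapsto a-iJa$). $S^{2n-1}\subset\mathbb R^{2n}$ is the unit sphere with the standard boundary orientation; $S(\Lambda_J)$ is the unit sphere of $\Lambda_J$ oriented as the boundary of its unit ball, with $\Lambda_J$ carrying its complex orientation. *)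

theory Defs
  imports "HOL-Analysis.Analysis"
begin

text \<open>Ordered bases are represented as functions b :: nat => 'a, of which only
  the entries b 0, ..., b (d-1) matter.\<close>

definition is_obasis :: "'a::real_vector set \<Rightarrow> nat \<Rightarrow> (nat \<Rightarrow> 'a) \<Rightarrow> bool" where
  "is_obasis V d b \<longleftrightarrow> (\<forall>k<d. b k \<in> V) \<and> inj_on b {..<d} \<and>
     independent (b ` {..<d}) \<and> span (b ` {..<d}) = V"

definition same_orient :: "'a::real_normed_vector set \<Rightarrow> nat \<Rightarrow> (nat \<Rightarrow> 'a) \<Rightarrow> (nat \<Rightarrow> 'a) \<Rightarrow> bool" where
  "same_orient V d b c \<longleftrightarrow>
     (\<exists>\<gamma> :: real \<Rightarrow> nat \<Rightarrow> 'a.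
        (\<forall>t\<in>{0..1}. is_obasis V d (\<gamma> t)) \<and>
        (\<forall>k<d. continuous_on {0..1} (\<lambda>t. \<gamma> t k)) \<and>
        (\<forall>k<d. \<gamma> 0 k = b k \<and> \<gamma> 1 k = c k))"

definition std_basis :: "nat \<Rightarrow> real^'n::{finite,linorder}" where
  "std_basis k = axis (sorted_list_of_set (UNIV :: 'n set) ! k) 1"

definition std_pos :: "(nat \<Rightarrow> real^'n::{finite,linorder}) \<Rightarrow> bool" where
  "std_pos b \<longleftrightarrow> same_orient UNIV CARD('n) b std_basis"

definition cvec :: "real^'n \<Rightarrow> complex^'n" where
  "cvec a = (\<chi> k. complex_of_real (a $ k))"

definition cmul :: "complex \<Rightarrow> complex^'n \<Rightarrow> complex^'n" where
  "cmul c v = (\<chi> k. c * (v $ k))"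

definition cplx_pos :: "(complex^'n) set \<Rightarrow> nat \<Rightarrow> (nat \<Rightarrow> complex^'n) \<Rightarrow> bool" where
  "cplx_pos W d b \<longleftrightarrow>
     (\<exists>w :: nat \<Rightarrow> complex^'n.
        is_obasis W d (\<lambda>k. if even k then w (k div 2) else cmul \<i> (w (k div 2))) \<and>
        same_orient W d b (\<lambda>k. if even k then w (k div 2) else cmul \<i> (w (k div 2))))"

text \<open>Unit sphere of a subspace, tangent spaces, boundary orientation
  (outward normal first).\<close>

definition usphere :: "'a::real_inner set \<Rightarrow> 'a set" where
  "usphere V = {x \<in> V. norm x = 1}"

definition tangent :: "'a::real_inner set \<Rightarrow> 'a \<Rightarrow> 'a set" where
  "tangent V x = {v \<in> V. inner x v = 0}"

definition pos_tangent ::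
  "'a::real_inner set \<Rightarrow> nat \<Rightarrow> ((nat \<Rightarrow> 'a) \<Rightarrow> bool) \<Rightarrow> 'a \<Rightarrow> (nat \<Rightarrow> 'a) \<Rightarrow> bool" where
  "pos_tangent V d P x v \<longleftrightarrow>
     is_obasis (tangent V x) (d - 1) v \<and> P (\<lambda>k. if k = 0 then x else v (k - 1))"

definition sphere_orient_preserving ::
  "'a::real_inner set \<Rightarrow> nat \<Rightarrow> ((nat \<Rightarrow> 'a) \<Rightarrow> bool) \<Rightarrow>
   'b::real_inner set \<Rightarrow> nat \<Rightarrow> ((nat \<Rightarrow> 'b) \<Rightarrow> bool) \<Rightarrow> ('a \<Rightarrow> 'b) \<Rightarrow> bool" where
  "sphere_orient_preserving V dV P W dW Q f \<longleftrightarrow>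
     (\<forall>x\<in>usphere V. f x \<in> usphere W) \<and>
     (\<forall>x\<in>usphere V. \<exists>f'. (f has_derivative f') (at x within usphere V) \<and>
        (\<forall>v. pos_tangent V dV P x v \<longrightarrow> pos_tangent W dW Q (f x) (\<lambda>k. f' (v k))))"

definition orth_cx_structure :: "(real^'n \<Rightarrow> real^'n) \<Rightarrow> bool" where
  "orth_cx_structure J \<longleftrightarrow> linear J \<and> (\<forall>a. J (J a) = - a) \<and>
     (\<forall>a b. inner (J a) (J b) = inner a b)"

definition orient_compatible :: "(real^('n::{finite,linorder}) \<Rightarrow> real^('n::{finite,linorder})) \<Rightarrow> bool" where
  "orient_compatible J \<longleftrightarrow>
     (\<exists>e. is_obasis UNIV CARD('n) (\<lambda>k. if even k then e (k div 2) else J (e (k div 2))) \<and>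
        std_pos (\<lambda>k. if even k then e (k div 2) else J (e (k div 2))))"

definition Lambda :: "(real^'n \<Rightarrow> real^'n) \<Rightarrow> (complex^'n) set" where
  "Lambda J = {cvec a - cmul \<i> (cvec (J a)) | a. True}"

end

theory Submission
  imports Defs
begin

text \<open>The map a \<mapsto> (a - iJa)/\<surd>2 is a real-linear isometry of \<real>^2n onto \<Lambda>_J that turns J into
  multiplication by i. A linear isometry maps the unit sphere to the unit sphere and is its own
  derivative there, so it preserves the boundary orientations iff it carries the standard
  orientation of \<real>^2n to the complex orientation of \<Lambda>_J. Since it carries bases
  e_1, Je_1, ..., e_n, Je_n to complex bases w_1, iw_1, ..., w_n, iw_n and back, the pulled-back
  complex orientation is the orientation of such J-bases, and the claim follows.\<close>

definition cx_frame :: "('a \<Rightarrow> 'a) \<Rightarrow> (nat \<Rightarrow> 'a) \<Rightarrow> nat \<Rightarrow> 'a" where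
  "cx_frame F e k = (if even k then e (k div 2) else F (e (k div 2)))"

lemma orient_compatible_iff_cx_frame:
  fixes J :: "real^('n::{finite,linorder}) \<Rightarrow> real^('n::{finite,linorder})"
  shows "orient_compatible J \<longleftrightarrow>
    (\<exists>e. is_obasis UNIV CARD('n::{finite,linorder}) (cx_frame J e) \<and> std_pos (cx_frame J e))"
  unfolding orient_compatible_def cx_frame_def[abs_def] by (rule refl)

lemma cplx_pos_iff_cx_frame:
  "cplx_pos W d b \<longleftrightarrow>
    (\<exists>w. is_obasis W d (cx_frame (cmul \<i>) w) \<and> same_orient W d b (cx_frame (cmul \<i>) w))"
  unfolding cplx_pos_def cx_frame_def[abs_def] by (rule refl)

lemma is_obasis_cong:
  assumes "is_obasis V d b" "\<And>k. k < d \<Longrightarrow> b k = c k"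
  shows "is_obasis V d c"
proof -
  have "b ` {..<d} = c ` {..<d}" using assms(2) by auto
  moreover have "inj_on c {..<d}" using assms unfolding is_obasis_def inj_on_def by auto
  ultimately show ?thesis using assms unfolding is_obasis_def by auto
qed

lemma same_orient_cong:
  assumes "same_orient V d b c" "\<And>k. k < d \<Longrightarrow> b k = b' k" "\<And>k. k < d \<Longrightarrow> c k = c' k"
  shows "same_orient V d b' c'"
  using assms unfolding same_orient_def by metis

lemma same_orient_refl:
  assumes "is_obasis V d b"
  shows "same_orient V d b b"
  unfolding same_orient_def using assms by (intro exI[of _ "\<lambda>t. b"]) auto

lemma same_orient_sym:
  assumes "same_orient V d b c"
  shows "same_orient V d c b"
proof -
  obtain g :: "real \<Rightarrow> nat \<Rightarrow> _" where g: "\<forall>t\<in>{0..1}. is_obasis V d (g t)"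
    "\<forall>k<d. continuous_on {0..1} (\<lambda>t. g t k)" "\<forall>k<d. g 0 k = b k \<and> g 1 k = c k"
    using assms unfolding same_orient_def by blast
  show ?thesis unfolding same_orient_def
  proof (intro exI[of _ "\<lambda>t. g (1 - t)"] conjI allI ballI impI)
    fix k assume "k < d"
    then have "continuous_on {0..1} ((\<lambda>t. g t k) \<circ> (\<lambda>t. 1 - t))"
      using g(2) by (intro continuous_on_compose continuous_intros)
        (auto elim!: continuous_on_subset)
    then show "continuous_on {0..1} (\<lambda>t. g (1 - t) k)" by (simp add: o_def)
  qed (use g in auto)
qed

lemma same_orient_trans:
  assumes "same_orient V d b c" "same_orient V d c e"
  shows "same_orient V d b e"
proof -
  obtain g :: "real \<Rightarrow> nat \<Rightarrow> _" where g: "\<forall>t\<in>{0..1}. is_obasis V d (g t)"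
    "\<forall>k<d. continuous_on {0..1} (\<lambda>t. g t k)" "\<forall>k<d. g 0 k = b k \<and> g 1 k = c k"
    using assms(1) unfolding same_orient_def by blast
  obtain h :: "real \<Rightarrow> nat \<Rightarrow> _" where h: "\<forall>t\<in>{0..1}. is_obasis V d (h t)"
    "\<forall>k<d. continuous_on {0..1} (\<lambda>t. h t k)" "\<forall>k<d. h 0 k = c k \<and> h 1 k = e k"
    using assms(2) unfolding same_orient_def by blast
  show ?thesis unfolding same_orient_def
  proof (intro exI[of _ "\<lambda>t. if t \<le> 1/2 then g (2*t) else h (2*t-1)"] conjI allI ballI impI)
    fix k assume "k < d"
    then have "path ((\<lambda>t. g t k) +++ (\<lambda>t. h t k))"
      using g h by (subst path_join) (auto simp: path_def pathstart_def pathfinish_def)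
    then show "continuous_on {0..1} (\<lambda>t. (if t \<le> 1/2 then g (2*t) else h (2*t-1)) k)"
      by (simp add: path_def joinpaths_def if_distrib[where f="\<lambda>f. f k"])
  qed (use g h in auto)
qed

lemma is_obasis_linear_image:
  assumes "is_obasis V d b" "linear T" "inj_on T V"
  shows "is_obasis (T ` V) d (\<lambda>k. T (b k))"
proof -
  have b: "\<And>k. k < d \<Longrightarrow> b k \<in> V" "span (b ` {..<d}) = V"
    "independent (b ` {..<d})" "inj_on b {..<d}"
    using assms unfolding is_obasis_def by auto
  have "inj_on (\<lambda>k. T (b k)) {..<d}"
    using b(1,4) assms(3) unfolding inj_on_def by auto
  moreover have "independent (T ` b ` {..<d})"
    using b(2,3) assms(2,3) by (intro linear_independent_injective_image) auto
  moreover have "span (T ` b ` {..<d}) = T ` V"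
    by (simp add: linear_span_image[OF assms(2)] b(2))
  ultimately show ?thesis
    using b(1) unfolding is_obasis_def image_image[symmetric] by auto
qed

lemma same_orient_linear_image:
  fixes T :: "'a::euclidean_space \<Rightarrow> 'b::euclidean_space"
  assumes "same_orient V d b c" "linear T" "inj_on T V"
  shows "same_orient (T ` V) d (\<lambda>k. T (b k)) (\<lambda>k. T (c k))"
proof -
  obtain g :: "real \<Rightarrow> nat \<Rightarrow> _" where g: "\<forall>t\<in>{0..1}. is_obasis V d (g t)"
    "\<forall>k<d. continuous_on {0..1} (\<lambda>t. g t k)" "\<forall>k<d. g 0 k = b k \<and> g 1 k = c k"
    using assms(1) unfolding same_orient_def by blast
  have "continuous_on {0..1} (\<lambda>t. T (g t k))" if "k < d" for k
    using g(2) that by (intro linear_continuous_on_compose[OF _ assms(2)]) auto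
  then show ?thesis unfolding same_orient_def
    using g is_obasis_linear_image[OF _ assms(2,3)]
    by (intro exI[of _ "\<lambda>t k. T (g t k)"]) auto
qed

lemma linear_left_inverse_image:
  fixes T :: "'a::euclidean_space \<Rightarrow> 'b::euclidean_space"
  assumes "linear T" "inj T"
  obtains g where "linear g" "inj_on g (T ` V)" "g ` T ` V = V" "\<And>x. g (T x) = x"
proof -
  obtain g where "linear g" "g \<circ> T = id"
    using linear_injective_left_inverse[OF assms] by blast
  then have "\<And>x. g (T x) = x" by (metis comp_apply id_apply)
  with \<open>linear g\<close> show ?thesis
    by (intro that) (auto simp: inj_on_def image_image)
qed

lemma is_obasis_linear_image_iff:
  fixes T :: "'a::euclidean_space \<Rightarrow> 'b::euclidean_space"
  assumes "linear T" "inj T"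
  shows "is_obasis (T ` V) d (\<lambda>k. T (b k)) \<longleftrightarrow> is_obasis V d b"
proof
  obtain g where g: "linear g" "inj_on g (T ` V)" "g ` T ` V = V" "\<And>x. g (T x) = x"
    using linear_left_inverse_image[OF assms, where V=V] by blast
  assume "is_obasis (T ` V) d (\<lambda>k. T (b k))"
  from is_obasis_linear_image[OF this g(1,2)] show "is_obasis V d b"
    by (simp add: g(3,4))
qed (use assms in \<open>auto intro: is_obasis_linear_image inj_on_subset\<close>)

lemma same_orient_linear_image_iff:
  fixes T :: "'a::euclidean_space \<Rightarrow> 'b::euclidean_space"
  assumes "linear T" "inj T"
  shows "same_orient (T ` V) d (\<lambda>k. T (b k)) (\<lambda>k. T (c k)) \<longleftrightarrow> same_orient V d b c"
proof
  obtain g where g: "linear g" "inj_on g (T ` V)" "g ` T ` V = V" "\<And>x. g (T x) = x"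
    using linear_left_inverse_image[OF assms, where V=V] by blast
  assume "same_orient (T ` V) d (\<lambda>k. T (b k)) (\<lambda>k. T (c k))"
  from same_orient_linear_image[OF this g(1,2)] show "same_orient V d b c"
    by (simp add: g(3,4))
qed (use assms in \<open>auto intro: same_orient_linear_image inj_on_subset\<close>)

lemma cplx_pos_same_orient:
  assumes "cplx_pos W d b" "same_orient W d c b"
  shows "cplx_pos W d c"
  using assms unfolding cplx_pos_def by (meson same_orient_trans)

lemma
  shows inj_on_std_basis:
      "inj_on (std_basis :: nat \<Rightarrow> real^('n::{finite,linorder})) {..<CARD('n::{finite,linorder})}"
    and std_basis_image:
      "(std_basis :: nat \<Rightarrow> real^('n::{finite,linorder})) ` {..<CARD('n::{finite,linorder})} = Basis"
proof -
  let ?l = "sorted_list_of_set (UNIV :: ('n::{finite,linorder}) set)"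
  have l: "distinct ?l" "length ?l = CARD('n::{finite,linorder})" "set ?l = UNIV" by auto
  then show "inj_on (std_basis :: nat \<Rightarrow> real^('n::{finite,linorder})) {..<CARD('n::{finite,linorder})}"
    unfolding inj_on_def std_basis_def by (auto simp: axis_eq_axis nth_eq_iff_index_eq)
  have "(!) ?l ` {..<CARD('n::{finite,linorder})} = UNIV"
    using l by (metis atLeast0LessThan set_map map_nth set_upt)
  moreover have "(Basis :: (real^('n::{finite,linorder})) set) = range (\<lambda>i. axis i 1)"
    by (auto simp: Basis_vec_def)
  moreover have "(std_basis :: nat \<Rightarrow> real^('n::{finite,linorder})) ` {..<CARD('n::{finite,linorder})} =
      (\<lambda>i. axis i 1) ` ((!) ?l ` {..<CARD('n::{finite,linorder})})"
    unfolding std_basis_def image_image ..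
  ultimately show "(std_basis :: nat \<Rightarrow> real^('n::{finite,linorder})) ` {..<CARD('n::{finite,linorder})} = Basis"
    by simp
qed

lemma std_basis_in_Basis:
  "k < CARD('n::{finite,linorder}) \<Longrightarrow> (std_basis k :: real^('n::{finite,linorder})) \<in> Basis"
  using std_basis_image by blast

lemma is_obasis_std_basis:
  "is_obasis UNIV CARD('n::{finite,linorder}) (std_basis :: nat \<Rightarrow> real^('n::{finite,linorder}))"
  unfolding is_obasis_def
  using inj_on_std_basis[where 'n='n] std_basis_image[where 'n='n]
  by (simp add: independent_Basis)

lemma is_obasis_tangent_std_basis:
  "is_obasis (tangent UNIV (std_basis 0 :: real^('n::{finite,linorder}))) (CARD('n::{finite,linorder}) - 1)
     (\<lambda>k. std_basis (Suc k))"
proof -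
  let ?N = "CARD('n::{finite,linorder})"
  have e0: "(std_basis 0 :: real^('n::{finite,linorder})) \<in> Basis"
    using std_basis_image by auto
  have Suc_image: "Suc ` {..<?N - 1} = {..<?N} - {0}"
    by (auto simp: image_Suc_lessThan)
  have "(\<lambda>k. std_basis (Suc k) :: real^('n::{finite,linorder})) ` {..<?N - 1} = std_basis ` Suc ` {..<?N - 1}"
    by (rule image_image[symmetric])
  also have "\<dots> = std_basis ` ({..<?N} - {0})"
    by (simp only: Suc_image)
  also have "\<dots> = Basis - {std_basis 0}"
    using inj_on_std_basis std_basis_image by (subst inj_on_image_set_diff) auto
  finally have im: "(\<lambda>k. std_basis (Suc k) :: real^('n::{finite,linorder})) ` {..<?N - 1} = Basis - {std_basis 0}" .
  have "inj_on (\<lambda>k. std_basis (Suc k) :: real^('n::{finite,linorder})) {..<?N - 1}"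
    using inj_on_std_basis unfolding inj_on_def by fastforce
  moreover have "tangent UNIV (std_basis 0 :: real^('n::{finite,linorder})) = span (Basis - {std_basis 0})"
    using special_hyperplane_span[OF e0] by (simp add: tangent_def)
  ultimately show ?thesis
    unfolding is_obasis_def im using independent_mono[OF independent_Basis] span_base
    by (metis Diff_subset image_eqI im lessThan_iff)
qed

lemma pos_tangent_std_basis:
  "pos_tangent UNIV CARD('n::{finite,linorder}) std_pos (std_basis 0 :: real^('n::{finite,linorder}))
     (\<lambda>k. std_basis (Suc k))"
proof -
  have "(\<lambda>k. if k = 0 then std_basis 0 else std_basis (Suc (k - 1))) =
      (std_basis :: nat \<Rightarrow> real^('n::{finite,linorder}))"
    by (auto simp: fun_eq_iff)
  then show ?thesis
    unfolding pos_tangent_def std_pos_def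
    using is_obasis_tangent_std_basis is_obasis_std_basis same_orient_refl by auto
qed

text \<open>A derivative within the sphere is only determined on tangent directions; along the great
  circle through x in direction v it must agree with the linear map itself.\<close>

lemma has_derivative_within_usphere_linear:
  fixes T :: "'a::euclidean_space \<Rightarrow> 'b::euclidean_space"
  assumes "linear T" "norm x = 1" "norm v = 1" "inner x v = 0"
    and "(T has_derivative f') (at x within usphere UNIV)"
  shows "f' v = T v"
proof -
  define g where "g = (\<lambda>t::real. cos t *\<^sub>R x + sin t *\<^sub>R v)"
  have "(g has_vector_derivative (- sin 0 *\<^sub>R x + cos 0 *\<^sub>R v)) (at 0)"
    unfolding g_def by (auto intro!: derivative_eq_intros)
  then have dg: "(g has_derivative (\<lambda>h. h *\<^sub>R v)) (at 0)"
    by (simp add: has_vector_derivative_def)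
  have "norm (g t) = 1" for t
  proof -
    have "(norm (g t))\<^sup>2 =
        (cos t)\<^sup>2 * (norm x)\<^sup>2 + (sin t)\<^sup>2 * (norm v)\<^sup>2 + 2 * cos t * sin t * inner x v"
      unfolding g_def power2_norm_eq_inner
      by (simp add: power2_eq_square inner_commute[of v x] algebra_simps)
    then have "(norm (g t))\<^sup>2 = 1" using assms(2-4) by simp
    then show ?thesis using norm_ge_zero[of "g t"] by (auto simp: power2_eq_1_iff)
  qed
  then have "range g \<subseteq> usphere UNIV" by (auto simp: usphere_def)
  then have "((T \<circ> g) has_derivative (f' \<circ> (\<lambda>h. h *\<^sub>R v))) (at 0)"
    using diff_chain_within[OF dg, of T f'] assms(5) by (simp add: g_def has_derivative_subset)
  moreover have "((T \<circ> g) has_derivative (T \<circ> (\<lambda>h. h *\<^sub>R v))) (at 0)"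
    by (rule diff_chain_at[OF dg linear_imp_has_derivative[OF assms(1)]])
  ultimately have "f' \<circ> (\<lambda>h. h *\<^sub>R v) = T \<circ> (\<lambda>h. h *\<^sub>R v)"
    by (rule has_derivative_unique)
  then show ?thesis by (metis comp_apply scaleR_one)
qed

lemma inj_if_inner_preserving:
  assumes "\<And>a b. inner (T a) (T b) = inner a b"
  shows "inj T"
proof (rule injI)
  fix a b assume "T a = T b"
  then have "inner (a - b) (a - b) = 0"
    using assms[of a a] assms[of a b] assms[of b b] by (simp add: inner_diff inner_commute)
  then show "a = b" by simp
qed

lemma tangent_inner_preserving_image:
  assumes "\<And>a b. inner (T a) (T b) = inner a b"
  shows "T ` tangent UNIV x = tangent (range T) (T x)"
  using assms by (auto simp: tangent_def)

lemma sphere_orient_preserving_linear_isometry_iff: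
  fixes T :: "real^('n::{finite,linorder}) \<Rightarrow> 'b::euclidean_space"
  assumes T: "linear T" "\<And>a b. inner (T a) (T b) = inner a b"
    and d: "CARD('n::{finite,linorder}) = d"
    and Q: "\<And>b c. Q b \<Longrightarrow> same_orient (range T) d c b \<Longrightarrow> Q c"
  shows "sphere_orient_preserving UNIV d std_pos (range T) d Q T \<longleftrightarrow> Q (\<lambda>k. T (std_basis k))"
proof -
  have norm_T: "norm (T a) = norm a" for a
    by (simp add: norm_eq_sqrt_inner T(2))
  have "inj T"
    using T(2) by (rule inj_if_inner_preserving)
  have basis_T: "is_obasis (range T) d (\<lambda>k. T (std_basis k))"
    by (simp add: is_obasis_linear_image_iff[OF T(1) \<open>inj T\<close>] is_obasis_std_basis flip: d)
  show ?thesis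
  proof
    assume SOP: "sphere_orient_preserving UNIV d std_pos (range T) d Q T"
    define x :: "real^('n::{finite,linorder})" where "x = std_basis 0"
    define v :: "nat \<Rightarrow> real^('n::{finite,linorder})" where "v = (\<lambda>k. std_basis (Suc k))"
    have "x \<in> usphere UNIV" by (simp add: usphere_def x_def std_basis_def)
    with SOP obtain f' where f': "(T has_derivative f') (at x within usphere UNIV)"
      and pos_f': "\<forall>v. pos_tangent UNIV d std_pos x v \<longrightarrow>
          pos_tangent (range T) d Q (T x) (\<lambda>k. f' (v k))"
      unfolding sphere_orient_preserving_def by blast
    have "pos_tangent UNIV d std_pos x v"
      using pos_tangent_std_basis by (simp add: x_def v_def flip: d)
    with pos_f' have Q_f': "Q (\<lambda>k. if k = 0 then T x else f' (v (k - 1)))"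
      by (simp add: pos_tangent_def)
    have frame_eq: "T (std_basis k) = (if k = 0 then T x else f' (v (k - 1)))" if "k < d" for k
    proof (cases "k = 0")
      case False
      have "x \<in> Basis" "std_basis k \<in> (Basis :: (real^('n::{finite,linorder})) set)" "x \<noteq> std_basis k"
        using \<open>k < d\<close> d False
        by (auto simp: x_def std_basis_in_Basis inj_on_eq_iff[OF inj_on_std_basis])
      then have "f' (std_basis k) = T (std_basis k)"
        by (intro has_derivative_within_usphere_linear[OF T(1) _ _ _ f'])
          (auto simp: inner_not_same_Basis)
      with False show ?thesis by (simp add: v_def)
    qed (simp add: x_def)
    have "same_orient (range T) d (\<lambda>k. T (std_basis k)) (\<lambda>k. if k = 0 then T x else f' (v (k - 1)))"
      by (rule same_orient_cong[OF same_orient_refl[OF basis_T] _ frame_eq]) simp_all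
    then show "Q (\<lambda>k. T (std_basis k))"
      using Q_f' Q by blast
  next
    assume Q_std: "Q (\<lambda>k. T (std_basis k))"
    have "pos_tangent (range T) d Q (T x) (\<lambda>k. T (v k))" if "pos_tangent UNIV d std_pos x v" for x v
    proof -
      from that have v: "is_obasis (tangent UNIV x) (d - 1) v"
        and c: "same_orient UNIV d (\<lambda>k. if k = 0 then x else v (k - 1)) std_basis"
        unfolding pos_tangent_def std_pos_def d by auto
      have "is_obasis (tangent (range T) (T x)) (d - 1) (\<lambda>k. T (v k))"
        using v by (simp add: tangent_inner_preserving_image[OF T(2), symmetric]
            is_obasis_linear_image_iff[OF T(1) \<open>inj T\<close>])
      moreover have "same_orient (range T) d
          (\<lambda>k. if k = 0 then T x else T (v (k - 1))) (\<lambda>k. T (std_basis k))"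
        using c same_orient_linear_image_iff[OF T(1) \<open>inj T\<close>,
            of UNIV d "\<lambda>k. if k = 0 then x else v (k - 1)"]
        by (simp add: if_distrib)
      ultimately show ?thesis
        using Q[OF Q_std] by (simp add: pos_tangent_def)
    qed
    then show "sphere_orient_preserving UNIV d std_pos (range T) d Q T"
      unfolding sphere_orient_preserving_def
      by (auto simp: usphere_def norm_T intro!: exI[of _ T] linear_imp_has_derivative[OF T(1)])
  qed
qed

lemma cx_frame_linear_image:
  assumes "\<And>a. F' (T a) = T (F a)"
  shows "cx_frame F' (\<lambda>j. T (e j)) k = T (cx_frame F e k)"
  by (simp add: cx_frame_def assms)

lemma cplx_pos_linear_image_iff:
  fixes T :: "'a::euclidean_space \<Rightarrow> complex^'n"
  assumes T: "linear T" "inj T" and T_J: "\<And>a. cmul \<i> (T a) = T (J a)"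
  shows "cplx_pos (range T) d (\<lambda>k. T (c k)) \<longleftrightarrow>
    (\<exists>e. is_obasis UNIV d (cx_frame J e) \<and> same_orient UNIV d c (cx_frame J e))"
proof
  assume "cplx_pos (range T) d (\<lambda>k. T (c k))"
  then obtain w where w: "is_obasis (range T) d (cx_frame (cmul \<i>) w)"
    and c_w: "same_orient (range T) d (\<lambda>k. T (c k)) (cx_frame (cmul \<i>) w)"
    unfolding cplx_pos_iff_cx_frame by blast
  define e where "e j = inv T (w j)" for j
  have "w (k div 2) \<in> range T" if "k < d" for k
  proof -
    have "2 * (k div 2) < d" using that by linarith
    then show ?thesis using w unfolding is_obasis_def cx_frame_def by force
  qed
  then have w_e: "cx_frame (cmul \<i>) w k = T (cx_frame J e k)" if "k < d" for k
    using that by (simp add: cx_frame_def e_def f_inv_into_f flip: T_J)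
  have "is_obasis (range T) d (\<lambda>k. T (cx_frame J e k))"
    using w w_e by (rule is_obasis_cong)
  moreover have "same_orient (range T) d (\<lambda>k. T (c k)) (\<lambda>k. T (cx_frame J e k))"
    using c_w by (rule same_orient_cong) (simp_all add: w_e)
  ultimately show "\<exists>e. is_obasis UNIV d (cx_frame J e) \<and> same_orient UNIV d c (cx_frame J e)"
    by (auto simp: is_obasis_linear_image_iff[OF T] same_orient_linear_image_iff[OF T])
next
  assume "\<exists>e. is_obasis UNIV d (cx_frame J e) \<and> same_orient UNIV d c (cx_frame J e)"
  then obtain e where "is_obasis UNIV d (cx_frame J e)" "same_orient UNIV d c (cx_frame J e)"
    by blast
  moreover have "cx_frame (cmul \<i>) (\<lambda>j. T (e j)) = (\<lambda>k. T (cx_frame J e k))"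
    using cx_frame_linear_image[of "cmul \<i>" T J] T_J by blast
  ultimately show "cplx_pos (range T) d (\<lambda>k. T (c k))"
    unfolding cplx_pos_iff_cx_frame
    by (metis is_obasis_linear_image_iff[OF T] same_orient_linear_image_iff[OF T])
qed

definition Lambda_iso :: "(real^'n \<Rightarrow> real^'n) \<Rightarrow> real^'n \<Rightarrow> complex^'n" where
  "Lambda_iso J a = (1 / sqrt 2) *\<^sub>R (cvec a - cmul \<i> (cvec (J a)))"

lemma Re_Lambda_iso: "Re (Lambda_iso J a $ k) = a $ k / sqrt 2"
  and Im_Lambda_iso: "Im (Lambda_iso J a $ k) = - (J a $ k / sqrt 2)"
  by (simp_all add: Lambda_iso_def cvec_def cmul_def)

lemma linear_Lambda_iso:
  assumes "linear J"
  shows "linear (Lambda_iso J)"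
  by (rule linearI) (simp_all add: vec_eq_iff complex_eq_iff Re_Lambda_iso Im_Lambda_iso
      linear_add[OF assms] linear_cmul[OF assms] add_divide_distrib)

lemma inner_Lambda_iso:
  assumes "\<And>a b. inner (J a) (J b) = inner a b"
  shows "inner (Lambda_iso J a) (Lambda_iso J b) = inner a b"
proof -
  have "inner (Lambda_iso J a) (Lambda_iso J b) = (\<Sum>k\<in>UNIV. (a$k * b$k + J a $ k * J b $ k) / 2)"
    unfolding inner_vec_def inner_complex_def Re_Lambda_iso Im_Lambda_iso
    by (intro sum.cong) (auto simp: field_simps)
  also have "\<dots> = (inner a b + inner (J a) (J b)) / 2"
    by (simp add: inner_vec_def sum.distrib sum_divide_distrib[symmetric])
  finally show ?thesis using assms by simp
qed

lemma cmul_i_Lambda_iso: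
  assumes "\<And>a. J (J a) = - a"
  shows "cmul \<i> (Lambda_iso J a) = Lambda_iso J (J a)"
  by (simp add: vec_eq_iff complex_eq_iff Re_Lambda_iso Im_Lambda_iso assms cmul_def)

lemma Lambda_eq_range_Lambda_iso:
  assumes "linear J"
  shows "Lambda J = range (Lambda_iso J)"
proof -
  have "cvec a - cmul \<i> (cvec (J a)) = Lambda_iso J (sqrt 2 *\<^sub>R a)" for a
    by (simp add: vec_eq_iff complex_eq_iff Re_Lambda_iso Im_Lambda_iso linear_cmul[OF assms]
        cvec_def cmul_def)
  then have "Lambda J = Lambda_iso J ` range (\<lambda>a. sqrt 2 *\<^sub>R a)"
    unfolding Lambda_def by auto
  moreover have "range (\<lambda>a::real^'n. sqrt 2 *\<^sub>R a) = UNIV"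
    by (auto intro!: image_eqI[where x="x /\<^sub>R sqrt 2" for x])
  ultimately show ?thesis by metis
qed

theorem proposition5p1:
  fixes n :: nat and J :: "real^('n::{finite,linorder}) \<Rightarrow> real^('n::{finite,linorder})"
  assumes "CARD('n::{finite,linorder}) = 2 * n" and "n \<ge> 2" and "orth_cx_structure J"
  shows "sphere_orient_preserving (UNIV :: (real^('n::{finite,linorder})) set) (2 * n) std_pos
           (Lambda J) (2 * n) (cplx_pos (Lambda J) (2 * n))
           (\<lambda>a. (1 / sqrt 2) *\<^sub>R (cvec a - cmul \<i> (cvec (J a))))
         \<longleftrightarrow> orient_compatible J"
proof -
  have J: "linear J" "\<And>a. J (J a) = - a" "\<And>a b. inner (J a) (J b) = inner a b"
    using assms(3) unfolding orth_cx_structure_def by auto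
  note L = linear_Lambda_iso[OF J(1)] inner_Lambda_iso[OF J(3)]
  note J_Lambda_iso = cmul_i_Lambda_iso[of J, OF J(2)]
  have "inj (Lambda_iso J)"
    using L(2) by (rule inj_if_inner_preserving)
  have "sphere_orient_preserving UNIV (2 * n) std_pos (Lambda J) (2 * n) (cplx_pos (Lambda J) (2 * n))
      (Lambda_iso J) \<longleftrightarrow> cplx_pos (Lambda J) (2 * n) (\<lambda>k. Lambda_iso J (std_basis k))"
    unfolding Lambda_eq_range_Lambda_iso[OF J(1)]
    using L assms(1) cplx_pos_same_orient by (rule sphere_orient_preserving_linear_isometry_iff)
  also have "\<dots> \<longleftrightarrow>
      (\<exists>e. is_obasis UNIV (2 * n) (cx_frame J e) \<and> same_orient UNIV (2 * n) std_basis (cx_frame J e))"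
    unfolding Lambda_eq_range_Lambda_iso[OF J(1)]
    by (rule cplx_pos_linear_image_iff[OF L(1) \<open>inj (Lambda_iso J)\<close>, OF J_Lambda_iso])
  also have "\<dots> \<longleftrightarrow> orient_compatible J"
    unfolding orient_compatible_iff_cx_frame std_pos_def assms(1) by (meson same_orient_sym)
  finally show ?thesis
    by (simp add: Lambda_iso_def[abs_def])
qed

end
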